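(* Let $p:E\to B$ be a morphism in $\mathbf{CLS}$ that is surjective, and let $E'$ be a closure space with the same underlying set as $E$ such that the identity map $1_E:E'\to E$ is a morphism in $\mathbf{CLS}$ (i.e. $\overline{Y}'\subseteq\overline{Y}$ for all $Y\subseteq E$). Let $E\times_BE'=\{(e,e')\mid p(e)=p(e')\}$ be the pullback in $\mathbf{CLS}$ of $p:E\to B$ and $p\circ 1_E:E'\to B$. Then the following are equivalent: (a) there exists a descent data for $p$ of the form $(E',1_E,\xi)$; (b) there exists a unique descent data for $p$ of the form $(E',1_E,\xi)$; (c) $(E',1_E,\pi_1)$ is a descent data for $p$, where $\pi_1:E\times_BE'\to E'$ is $\pi_1(e,e')=e$; (d) the first projection $\pi_1:E\times_BE'\to E'$, $(e,e')\mapsto e$, is a morphism in $\mathbf{CLS}$; (e) $\overline{Y}\cap p^{-1}\big(p(\overline{p^{-1}(p(Y))}')\big)\subseteq\overline{Y}'$ for all $Y\subseteq E$; (f) $\overline{Y}\cap p^{-1}\big(p(\overline{p^{-1}(p(Y))}')\big)=\overline{Y}'$ for all $Y\subseteq E$; (g) $\overline{Y}\cap p^{-1}\big(p(\overline{p^{-1}(p(Y))}')\big)\subseteq Y$ for all $Y\in\mathcal{C}_{E'}$; (h) $\overline{Y}\cap p^{-1}\big(p(\overline{p^{-1}(p(Y))}')\big)=Y$ for all $Y\in\mathcal{C}_{E'}$.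
   Context: A closure space is a pair $(A,\mathcal{C}_A)$ where $A$ is a set and $\mathcal{C}_A$ is a set of subsets of $A$ closed under arbitrary intersections (so $A\in\mathcal{C}_A$); elements of $\mathcal{C}_A$ are called closed. The category $\mathbf{CLS}$ has closure spaces as objects and, as morphisms $\alpha:A\to B$, maps with $\alpha^{-1}(B')\in\mathcal{C}_A$ for all $B'\in\mathcal{C}_B$. Pullbacks in $\mathbf{CLS}$ are set-theoretic pullbacks with closed sets $\pi_1^{-1}(E_0)\cap\pi_2^{-1}(A_0)$ for $E_0,A_0$ closed in the factors. Notation: for $Y\subseteq E$, $\overline{Y}$ is the closure in $E$ and $\overline{Y}'$ the closure in $E'$ (closure of $X$ in a space with closed sets $\mathcal{C}$ is $\bigcap_{X\subseteq C\in\mathcal{C}}C$). For a morphism $p:E\to B$ in a category with pullbacks, a descent data for $p$ is a triple $(C,\gamma,\xi)$ with $\gamma:C\to E$ and $\xi:E\times_BC\to C$, where $E\times_BC$ is the pullback of $p$ and $p\gamma$ with projections $\pi_1,\pi_2$, such that $\gamma\circ\xi=\pi_1$, $\xi\circ\langle\gamma,1_C\rangle=1_C$, and $\xi\circ(E\times_B\xi)=\xi\circ(E\times_B\pi_2)$ as morphisms $E\times_B(E\times_BC)\to C$ (in elements: $\xi(e,\xi(e',c))=\xi(e,c)$). *)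

theory Defs
  imports Main
begin

definition closure_space :: "'a set \<Rightarrow> 'a set set \<Rightarrow> bool" where
  "closure_space A C \<longleftrightarrow> C \<subseteq> Pow A \<and> (\<forall>S. S \<subseteq> C \<longrightarrow> A \<inter> \<Inter>S \<in> C)"

definition cls_mor :: "'a set \<Rightarrow> 'a set set \<Rightarrow> 'b set \<Rightarrow> 'b set set \<Rightarrow> ('a \<Rightarrow> 'b) \<Rightarrow> bool" where
  "cls_mor A CA B CB f \<longleftrightarrow> (\<forall>x\<in>A. f x \<in> B) \<and> (\<forall>B'\<in>CB. {x\<in>A. f x \<in> B'} \<in> CA)"

definition cl :: "'a set \<Rightarrow> 'a set set \<Rightarrow> 'a set \<Rightarrow> 'a set" where
  "cl A C X = A \<inter> \<Inter>{D \<in> C. X \<subseteq> D}"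

definition pb_set :: "'x set \<Rightarrow> 'y set \<Rightarrow> ('x \<Rightarrow> 'z) \<Rightarrow> ('y \<Rightarrow> 'z) \<Rightarrow> ('x \<times> 'y) set" where
  "pb_set X Y f g = {(x, y). x \<in> X \<and> y \<in> Y \<and> f x = g y}"

definition pb_closed :: "'x set \<Rightarrow> 'x set set \<Rightarrow> 'y set \<Rightarrow> 'y set set
    \<Rightarrow> ('x \<Rightarrow> 'z) \<Rightarrow> ('y \<Rightarrow> 'z) \<Rightarrow> ('x \<times> 'y) set set" where
  "pb_closed X CX Y CY f g =
     {{q \<in> pb_set X Y f g. fst q \<in> X0 \<and> snd q \<in> Y0} | X0 Y0. X0 \<in> CX \<and> Y0 \<in> CY}"

text \<open>Descent data (C, gamma, xi) for p : E \<rightarrow> B; equalities of morphisms are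
  equalities of maps on the respective carriers.\<close>
definition descent_data ::
  "'e set \<Rightarrow> 'e set set \<Rightarrow> 'b set \<Rightarrow> 'b set set \<Rightarrow> ('e \<Rightarrow> 'b)
   \<Rightarrow> 'c set \<Rightarrow> 'c set set \<Rightarrow> ('c \<Rightarrow> 'e) \<Rightarrow> ('e \<times> 'c \<Rightarrow> 'c) \<Rightarrow> bool" where
  "descent_data E CE B CB p C CC \<gamma> \<xi> \<longleftrightarrow>
     cls_mor C CC E CE \<gamma> \<and>
     cls_mor (pb_set E C p (p \<circ> \<gamma>)) (pb_closed E CE C CC p (p \<circ> \<gamma>)) C CC \<xi> \<and>
     (\<forall>q \<in> pb_set E C p (p \<circ> \<gamma>). \<gamma> (\<xi> q) = fst q) \<and>
     (\<forall>c \<in> C. \<xi> (\<gamma> c, c) = c) \<and>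
     (\<forall>e\<in>E. \<forall>e'\<in>E. \<forall>c\<in>C. p e = p e' \<and> p e' = p (\<gamma> c) \<longrightarrow> \<xi> (e, \<xi> (e', c)) = \<xi> (e, c))"

end

theory Submission
  imports Defs
begin

text \<open>Because the structure map is the identity, the axiom \<open>\<gamma> \<circ> \<xi> = \<pi>\<^sub>1\<close> forces
  \<open>\<xi> = \<pi>\<^sub>1\<close>, and for \<open>\<pi>\<^sub>1\<close> the remaining axioms hold trivially; so a descent datum
  exists, is unique, and equals \<open>\<pi>\<^sub>1\<close> as soon as \<open>\<pi>\<^sub>1\<close> is a morphism. For \<open>Y\<close> closed
  in \<open>E'\<close>, the preimage \<open>\<pi>\<^sub>1\<^sup>-\<^sup>1(Y)\<close> contains the diagonal over \<open>Y\<close> and all pairs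
  \<open>(y, e')\<close> with \<open>p e' = p y\<close>, so the smallest closed rectangle containing it is cut out by
  \<open>cl Y\<close> and \<open>cl' (p\<^sup>-\<^sup>1 (p Y))\<close>; its first projection is the set on the left of (e)--(h).
  Hence \<open>\<pi>\<^sub>1\<close> is a morphism iff that operator shrinks every closed set of \<open>E'\<close>, and the
  reformulations in terms of arbitrary \<open>Y\<close> follow from its monotonicity and from its
  dominating the closure in \<open>E'\<close>.\<close>

lemma cl_closed: "closure_space A C \<Longrightarrow> cl A C X \<in> C"
  unfolding closure_space_def cl_def by (metis (no_types, lifting) mem_Collect_eq subsetI)

lemma subset_cl: "X \<subseteq> A \<Longrightarrow> X \<subseteq> cl A C X"
  unfolding cl_def by blast

lemma cl_subset_carrier: "cl A C X \<subseteq> A"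
  unfolding cl_def by blast

lemma cl_mono: "X \<subseteq> Y \<Longrightarrow> cl A C X \<subseteq> cl A C Y"
  unfolding cl_def by blast

lemma cl_least: "D \<in> C \<Longrightarrow> X \<subseteq> D \<Longrightarrow> cl A C X \<subseteq> D"
  unfolding cl_def by blast

lemma cl_of_closed: "closure_space A C \<Longrightarrow> D \<in> C \<Longrightarrow> cl A C D = D"
  unfolding closure_space_def cl_def by blast

lemma cl_antimono: "C \<subseteq> C' \<Longrightarrow> cl A C' X \<subseteq> cl A C X"
  unfolding cl_def by blast

lemma closed_subset_carrier: "closure_space A C \<Longrightarrow> D \<in> C \<Longrightarrow> D \<subseteq> A"
  unfolding closure_space_def by blast

lemma cls_mor_id_imp_closed_subset:
  assumes "closure_space A C" and "cls_mor A C' A C id"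
  shows "C \<subseteq> C'"
proof
  fix D assume "D \<in> C"
  then have "{x \<in> A. id x \<in> D} = D"
    using closed_subset_carrier[OF assms(1)] by auto
  with \<open>D \<in> C\<close> show "D \<in> C'"
    using assms(2) unfolding cls_mor_def by metis
qed

lemma mono_le_cl_iff_closed:
  assumes "closure_space A C" and "mono H"
  shows "(\<forall>Y. Y \<subseteq> A \<longrightarrow> H Y \<subseteq> cl A C Y) \<longleftrightarrow> (\<forall>D \<in> C. H D \<subseteq> D)"
proof
  assume "\<forall>Y. Y \<subseteq> A \<longrightarrow> H Y \<subseteq> cl A C Y"
  then show "\<forall>D \<in> C. H D \<subseteq> D"
    using assms(1) by (metis cl_of_closed closed_subset_carrier)
next
  assume closed: "\<forall>D \<in> C. H D \<subseteq> D"
  show "\<forall>Y. Y \<subseteq> A \<longrightarrow> H Y \<subseteq> cl A C Y"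
  proof (intro allI impI)
    fix Y assume "Y \<subseteq> A"
    then have "H Y \<subseteq> H (cl A C Y)"
      using assms(2) subset_cl by (metis monoD)
    also have "\<dots> \<subseteq> cl A C Y"
      using closed cl_closed[OF assms(1)] by blast
    finally show "H Y \<subseteq> cl A C Y" .
  qed
qed

lemma exists_unique_determined_iff:
  assumes "\<And>\<xi>. D \<xi> \<longleftrightarrow> (\<forall>q \<in> P. \<xi> q = f q) \<and> M"
  shows "(\<exists>\<xi>. D \<xi>) \<longleftrightarrow> (\<exists>\<xi>. D \<xi> \<and> (\<forall>\<xi>'. D \<xi>' \<longrightarrow> (\<forall>q \<in> P. \<xi>' q = \<xi> q)))"
    and "(\<exists>\<xi>. D \<xi> \<and> (\<forall>\<xi>'. D \<xi>' \<longrightarrow> (\<forall>q \<in> P. \<xi>' q = \<xi> q))) \<longleftrightarrow> D f"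
    and "D f \<longleftrightarrow> M"
  using assms by metis+

lemma descent_data_id_iff:
  assumes "cls_mor E CE' E CE id"
  shows "descent_data E CE B CB p E CE' id \<xi> \<longleftrightarrow>
    (\<forall>q \<in> pb_set E E p p. \<xi> q = fst q) \<and>
    cls_mor (pb_set E E p p) (pb_closed E CE E CE' p p) E CE' fst"
    (is "?dd \<longleftrightarrow> ?proj \<and> cls_mor ?P ?CP E CE' fst")
proof -
  have same_mor: "cls_mor ?P ?CP E CE' \<xi> \<longleftrightarrow> cls_mor ?P ?CP E CE' fst" if ?proj
  proof -
    have "{q \<in> ?P. \<xi> q \<in> D} = {q \<in> ?P. fst q \<in> D}" for D
      using that by auto
    then show ?thesis
      using that unfolding cls_mor_def by auto
  qed
  show ?thesis
  proof
    assume ?dd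
    then have ?proj and "cls_mor ?P ?CP E CE' \<xi>"
      unfolding descent_data_def by auto
    then show "?proj \<and> cls_mor ?P ?CP E CE' fst"
      using same_mor by blast
  next
    assume "?proj \<and> cls_mor ?P ?CP E CE' fst"
    then show ?dd
      using assms same_mor unfolding descent_data_def by (auto simp: pb_set_def)
  qed
qed

definition saturation :: "'e set \<Rightarrow> ('e \<Rightarrow> 'b) \<Rightarrow> 'e set \<Rightarrow> 'e set" where
  "saturation E p Y = {e \<in> E. p e \<in> p ` Y}"

definition descent_hull ::
  "'e set \<Rightarrow> 'e set set \<Rightarrow> 'e set set \<Rightarrow> ('e \<Rightarrow> 'b) \<Rightarrow> 'e set \<Rightarrow> 'e set" where
  "descent_hull E CE CE' p Y = cl E CE Y \<inter> saturation E p (cl E CE' (saturation E p Y))"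

lemma saturation_subset: "saturation E p Y \<subseteq> E"
  unfolding saturation_def by blast

lemma subset_saturation: "Y \<subseteq> E \<Longrightarrow> Y \<subseteq> saturation E p Y"
  unfolding saturation_def by blast

lemma saturation_mono: "X \<subseteq> Y \<Longrightarrow> saturation E p X \<subseteq> saturation E p Y"
  unfolding saturation_def by blast

lemma mono_descent_hull: "mono (descent_hull E CE CE' p)"
proof (rule monoI)
  fix X Y :: "'a set"
  assume "X \<subseteq> Y"
  then show "descent_hull E CE CE' p X \<subseteq> descent_hull E CE CE' p Y"
    unfolding descent_hull_def by (meson Int_mono cl_mono saturation_mono)
qed

lemma cl_subset_descent_hull:
  assumes "CE \<subseteq> CE'" and "Y \<subseteq> E"
  shows "cl E CE' Y \<subseteq> descent_hull E CE CE' p Y"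
proof -
  have "cl E CE' Y \<subseteq> saturation E p (cl E CE' Y)"
    by (rule subset_saturation[OF cl_subset_carrier])
  also have "\<dots> \<subseteq> saturation E p (cl E CE' (saturation E p Y))"
    using subset_saturation[OF assms(2)] by (rule saturation_mono[OF cl_mono])
  finally show ?thesis
    using cl_antimono[OF assms(1)] unfolding descent_hull_def by blast
qed

lemma fst_preimage_pb_closed_iff:
  assumes "closure_space E CE" and "closure_space E CE'" and "Y \<subseteq> E"
  shows "{q \<in> pb_set E E p p. fst q \<in> Y} \<in> pb_closed E CE E CE' p p \<longleftrightarrow>
    descent_hull E CE CE' p Y \<subseteq> Y"
    (is "?F \<in> ?CP \<longleftrightarrow> _")
proof
  assume "?F \<in> ?CP"
  then have "\<exists>X0 Y0. ?F = {q \<in> pb_set E E p p. fst q \<in> X0 \<and> snd q \<in> Y0} \<and> X0 \<in> CE \<and> Y0 \<in> CE'"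
    unfolding pb_closed_def by (simp only: mem_Collect_eq)
  then obtain X0 Y0 where F_eq: "?F = {q \<in> pb_set E E p p. fst q \<in> X0 \<and> snd q \<in> Y0}"
    and "X0 \<in> CE" "Y0 \<in> CE'"
    by (elim exE conjE)
  let ?R = "{q \<in> pb_set E E p p. fst q \<in> X0 \<and> snd q \<in> Y0}"
  have pairs_in_rectangle: "(y, e') \<in> ?R" if "y \<in> Y" "e' \<in> E" "p y = p e'" for y e'
  proof -
    from that assms(3) have "(y, e') \<in> ?F" by (simp add: pb_set_def subsetD)
    then show ?thesis by (simp only: F_eq)
  qed
  have "Y \<subseteq> X0"
  proof
    fix y assume "y \<in> Y"
    with assms(3) have "(y, y) \<in> ?R" by (intro pairs_in_rectangle) auto
    then show "y \<in> X0" by simp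
  qed
  then have X0: "cl E CE Y \<subseteq> X0"
    using \<open>X0 \<in> CE\<close> by (rule cl_least[rotated])
  have "saturation E p Y \<subseteq> Y0"
  proof
    fix e' assume "e' \<in> saturation E p Y"
    then obtain y where "y \<in> Y" "e' \<in> E" "p e' = p y"
      unfolding saturation_def by blast
    then have "(y, e') \<in> ?R" by (intro pairs_in_rectangle) simp_all
    then show "e' \<in> Y0" by simp
  qed
  then have Y0: "cl E CE' (saturation E p Y) \<subseteq> Y0"
    using \<open>Y0 \<in> CE'\<close> by (rule cl_least[rotated])
  show "descent_hull E CE CE' p Y \<subseteq> Y"
  proof
    fix e assume "e \<in> descent_hull E CE CE' p Y"
    then have "e \<in> E" "e \<in> cl E CE Y" and "p e \<in> p ` cl E CE' (saturation E p Y)"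
      by (simp_all add: descent_hull_def saturation_def)
    then obtain e' where "p e = p e'" and e': "e' \<in> cl E CE' (saturation E p Y)"
      by (elim imageE)
    moreover have "e' \<in> E" using cl_subset_carrier e' by (rule subsetD)
    ultimately have "(e, e') \<in> pb_set E E p p"
      using \<open>e \<in> E\<close> by (simp add: pb_set_def)
    moreover have "e \<in> X0" "e' \<in> Y0"
      using X0 Y0 \<open>e \<in> cl E CE Y\<close> e' by blast+
    ultimately have "(e, e') \<in> ?R" by simp
    then have "(e, e') \<in> ?F" by (simp only: F_eq)
    then show "e \<in> Y" by simp
  qed
next
  assume hull: "descent_hull E CE CE' p Y \<subseteq> Y"
  let ?X0 = "cl E CE Y" and ?Y0 = "cl E CE' (saturation E p Y)"
  have "?F = {q \<in> pb_set E E p p. fst q \<in> ?X0 \<and> snd q \<in> ?Y0}"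
  proof (intro set_eqI iffI)
    fix q assume "q \<in> ?F"
    then obtain e e' where q: "q = (e, e')" "e' \<in> E" "p e = p e'" "e \<in> Y"
      by (auto simp: pb_set_def)
    have "e \<in> ?X0"
      using subset_cl[OF assms(3)] q(4) by blast
    moreover have "p e' \<in> p ` Y"
      by (rule image_eqI[of _ _ e]) (use q in auto)
    with q(2) have "e' \<in> ?Y0"
      by (intro subsetD[OF subset_cl[OF saturation_subset]]) (simp add: saturation_def)
    ultimately show "q \<in> {q \<in> pb_set E E p p. fst q \<in> ?X0 \<and> snd q \<in> ?Y0}"
      using \<open>q \<in> ?F\<close> q(1) by simp
  next
    fix q assume q: "q \<in> {q \<in> pb_set E E p p. fst q \<in> ?X0 \<and> snd q \<in> ?Y0}"
    then obtain e e' where qe: "q = (e, e')" "e \<in> E" "p e = p e'" "e \<in> ?X0" "e' \<in> ?Y0"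
      by (auto simp: pb_set_def)
    have "p e \<in> p ` ?Y0"
      by (rule image_eqI[of _ _ e']) (use qe in auto)
    with qe(2,4) have "e \<in> descent_hull E CE CE' p Y"
      unfolding descent_hull_def saturation_def by simp
    with hull have "e \<in> Y" by blast
    with q qe(1) show "q \<in> ?F" by simp
  qed
  moreover have "?X0 \<in> CE" "?Y0 \<in> CE'"
    using assms(1,2) by (auto intro: cl_closed)
  ultimately show "?F \<in> ?CP"
    unfolding pb_closed_def by (intro CollectI exI conjI)
qed

lemma fst_cls_mor_iff_descent_hull_closed:
  assumes "closure_space E CE" and "closure_space E CE'"
  shows "cls_mor (pb_set E E p p) (pb_closed E CE E CE' p p) E CE' fst \<longleftrightarrow>
    (\<forall>Y \<in> CE'. descent_hull E CE CE' p Y \<subseteq> Y)"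
proof -
  have "cls_mor (pb_set E E p p) (pb_closed E CE E CE' p p) E CE' fst \<longleftrightarrow>
      (\<forall>Y \<in> CE'. {q \<in> pb_set E E p p. fst q \<in> Y} \<in> pb_closed E CE E CE' p p)"
    unfolding cls_mor_def by (auto simp: pb_set_def)
  moreover have "\<forall>Y \<in> CE'. {q \<in> pb_set E E p p. fst q \<in> Y} \<in> pb_closed E CE E CE' p p \<longleftrightarrow>
      descent_hull E CE CE' p Y \<subseteq> Y"
    using fst_preimage_pb_closed_iff[OF assms] closed_subset_carrier[OF assms(2)] by blast
  ultimately show ?thesis by blast
qed

theorem lemma4p1:
  fixes E :: "'e set" and CE CE' :: "'e set set"
    and B :: "'b set" and CB :: "'b set set" and p :: "'e \<Rightarrow> 'b"
  assumes "closure_space E CE" and "closure_space B CB" and "closure_space E CE'"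
    and "cls_mor E CE B CB p" and "p ` E = B"
    and "cls_mor E CE' E CE id"
  defines "P \<equiv> pb_set E E p (p \<circ> id)"
    and "CP \<equiv> pb_closed E CE E CE' p (p \<circ> id)"
  shows
    "((\<exists>\<xi>. descent_data E CE B CB p E CE' id \<xi>)
        \<longleftrightarrow> (\<exists>\<xi>. descent_data E CE B CB p E CE' id \<xi> \<and>
               (\<forall>\<xi>'. descent_data E CE B CB p E CE' id \<xi>' \<longrightarrow> (\<forall>q\<in>P. \<xi>' q = \<xi> q)))) \<and>
     ((\<exists>\<xi>. descent_data E CE B CB p E CE' id \<xi> \<and>
               (\<forall>\<xi>'. descent_data E CE B CB p E CE' id \<xi>' \<longrightarrow> (\<forall>q\<in>P. \<xi>' q = \<xi> q)))
        \<longleftrightarrow> descent_data E CE B CB p E CE' id fst) \<and>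
     (descent_data E CE B CB p E CE' id fst \<longleftrightarrow> cls_mor P CP E CE' fst) \<and>
     (cls_mor P CP E CE' fst \<longleftrightarrow>
        (\<forall>Y. Y \<subseteq> E \<longrightarrow>
           cl E CE Y \<inter> {e \<in> E. p e \<in> p ` cl E CE' {e' \<in> E. p e' \<in> p ` Y}} \<subseteq> cl E CE' Y)) \<and>
     ((\<forall>Y. Y \<subseteq> E \<longrightarrow>
           cl E CE Y \<inter> {e \<in> E. p e \<in> p ` cl E CE' {e' \<in> E. p e' \<in> p ` Y}} \<subseteq> cl E CE' Y)
        \<longleftrightarrow> (\<forall>Y. Y \<subseteq> E \<longrightarrow>
           cl E CE Y \<inter> {e \<in> E. p e \<in> p ` cl E CE' {e' \<in> E. p e' \<in> p ` Y}} = cl E CE' Y)) \<and>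
     ((\<forall>Y. Y \<subseteq> E \<longrightarrow>
           cl E CE Y \<inter> {e \<in> E. p e \<in> p ` cl E CE' {e' \<in> E. p e' \<in> p ` Y}} = cl E CE' Y)
        \<longleftrightarrow> (\<forall>Y \<in> CE'.
           cl E CE Y \<inter> {e \<in> E. p e \<in> p ` cl E CE' {e' \<in> E. p e' \<in> p ` Y}} \<subseteq> Y)) \<and>
     ((\<forall>Y \<in> CE'.
           cl E CE Y \<inter> {e \<in> E. p e \<in> p ` cl E CE' {e' \<in> E. p e' \<in> p ` Y}} \<subseteq> Y)
        \<longleftrightarrow> (\<forall>Y \<in> CE'.
           cl E CE Y \<inter> {e \<in> E. p e \<in> p ` cl E CE' {e' \<in> E. p e' \<in> p ` Y}} = Y))"
proof -
  let ?H = "descent_hull E CE CE' p"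
  have "CE \<subseteq> CE'"
    using assms(1,6) by (rule cls_mor_id_imp_closed_subset)
  then have hull_ge_cl: "Y \<subseteq> E \<Longrightarrow> cl E CE' Y \<subseteq> ?H Y" for Y
    by (rule cl_subset_descent_hull)
  have dd_iff: "descent_data E CE B CB p E CE' id \<xi> \<longleftrightarrow>
      (\<forall>q \<in> P. \<xi> q = fst q) \<and> cls_mor P CP E CE' fst" for \<xi>
    using descent_data_id_iff[OF assms(6)] unfolding P_def CP_def by simp
  have d_iff_g: "cls_mor P CP E CE' fst \<longleftrightarrow> (\<forall>Y \<in> CE'. ?H Y \<subseteq> Y)"
    using fst_cls_mor_iff_descent_hull_closed[OF assms(1,3)] unfolding P_def CP_def by simp
  have e_iff_g: "(\<forall>Y. Y \<subseteq> E \<longrightarrow> ?H Y \<subseteq> cl E CE' Y) \<longleftrightarrow> (\<forall>Y \<in> CE'. ?H Y \<subseteq> Y)"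
    using assms(3) mono_descent_hull by (rule mono_le_cl_iff_closed)
  have e_iff_f: "(\<forall>Y. Y \<subseteq> E \<longrightarrow> ?H Y \<subseteq> cl E CE' Y) \<longleftrightarrow> (\<forall>Y. Y \<subseteq> E \<longrightarrow> ?H Y = cl E CE' Y)"
    using hull_ge_cl by blast
  have g_iff_h: "(\<forall>Y \<in> CE'. ?H Y \<subseteq> Y) \<longleftrightarrow> (\<forall>Y \<in> CE'. ?H Y = Y)"
    using hull_ge_cl cl_of_closed[OF assms(3)] closed_subset_carrier[OF assms(3)] by blast
  have d_iff_e: "cls_mor P CP E CE' fst \<longleftrightarrow> (\<forall>Y. Y \<subseteq> E \<longrightarrow> ?H Y \<subseteq> cl E CE' Y)"
    using d_iff_g e_iff_g by blast
  have f_iff_g: "(\<forall>Y. Y \<subseteq> E \<longrightarrow> ?H Y = cl E CE' Y) \<longleftrightarrow> (\<forall>Y \<in> CE'. ?H Y \<subseteq> Y)"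
    by (subst e_iff_f[symmetric]) (rule e_iff_g)
  show ?thesis
    unfolding saturation_def[symmetric] descent_hull_def[symmetric]
    by (intro conjI exists_unique_determined_iff[OF dd_iff] d_iff_e e_iff_f f_iff_g g_iff_h)
qed

end
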